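(* Let $\{F_x : x\in V(G)\}$ be a representation of a restricted frame graph $G$, and let $C$ be an induced cycle of $G$. Then there is a vertex $v\in V(C)$ such that $F_v$ contains the frame of every vertex in $V(C)\setminus N[v]$. Moreover, if $u\in V(C)$, $u\neq v$, is another vertex such that $F_u$ contains the frame of every vertex in $V(C)\setminus N[u]$, then $u$ is adjacent to $v$.
   Context: $N[v]=\{v\}\cup N(v)$. A frame is the boundary of an axis-parallel box $I\times J\subset\mathbb R^2$. A representation of a graph $G$ as a restricted frame graph is a family of frames $\{F_x : x\in V(G)\}$ with $xy\in E(G)$ iff $F_x\cap F_y\neq\emptyset$, satisfying: (1) corners of a frame do not coincide with any point of another frame; (2) the left side of any frame does not intersect any other frame; (3) if the right side of a frame intersects a second frame, this right side intersects both the top and the bottom side of the second frame; (4) if two frames have non-empty intersection, then no frame is entirely contained in the intersection of the two regions bounded by these two frames. A frame $F_1$ contains a frame $F_2$ if $F_1\cap F_2=\emptyset$ and $F_2$ lies in the region bounded by $F_1$. *)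

theory Defs
  imports Complex_Main
begin

text \<open>A frame is the boundary of an axis-parallel box [x1,x2] x [y1,y2] in the plane
  (points are pairs of reals). We record a frame by its four coordinates.\<close>

record frame =
  fx1 :: real
  fx2 :: real
  fy1 :: real
  fy2 :: real

definition valid_frame :: "frame \<Rightarrow> bool" where
  "valid_frame F \<longleftrightarrow> fx1 F < fx2 F \<and> fy1 F < fy2 F"

definition left_side :: "frame \<Rightarrow> (real \<times> real) set" where
  "left_side F = {(x, y). x = fx1 F \<and> fy1 F \<le> y \<and> y \<le> fy2 F}"

definition right_side :: "frame \<Rightarrow> (real \<times> real) set" where
  "right_side F = {(x, y). x = fx2 F \<and> fy1 F \<le> y \<and> y \<le> fy2 F}"

definition bottom_side :: "frame \<Rightarrow> (real \<times> real) set" where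
  "bottom_side F = {(x, y). y = fy1 F \<and> fx1 F \<le> x \<and> x \<le> fx2 F}"

definition top_side :: "frame \<Rightarrow> (real \<times> real) set" where
  "top_side F = {(x, y). y = fy2 F \<and> fx1 F \<le> x \<and> x \<le> fx2 F}"

definition frame_set :: "frame \<Rightarrow> (real \<times> real) set" where
  "frame_set F = left_side F \<union> right_side F \<union> bottom_side F \<union> top_side F"

definition corners :: "frame \<Rightarrow> (real \<times> real) set" where
  "corners F = {(fx1 F, fy1 F), (fx1 F, fy2 F), (fx2 F, fy1 F), (fx2 F, fy2 F)}"

definition region :: "frame \<Rightarrow> (real \<times> real) set" where
  "region F = {(x, y). fx1 F \<le> x \<and> x \<le> fx2 F \<and> fy1 F \<le> y \<and> y \<le> fy2 F}"

definition frame_contains :: "frame \<Rightarrow> frame \<Rightarrow> bool" where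
  "frame_contains F1 F2 \<longleftrightarrow> frame_set F1 \<inter> frame_set F2 = {} \<and> frame_set F2 \<subseteq> region F1"

definition simple_graph :: "'v set \<Rightarrow> ('v \<Rightarrow> 'v \<Rightarrow> bool) \<Rightarrow> bool" where
  "simple_graph V adj \<longleftrightarrow> finite V \<and>
     (\<forall>x y. adj x y \<longrightarrow> x \<in> V \<and> y \<in> V \<and> x \<noteq> y \<and> adj y x)"

definition closed_nbhd :: "('v \<Rightarrow> 'v \<Rightarrow> bool) \<Rightarrow> 'v \<Rightarrow> 'v set" where
  "closed_nbhd adj v = {v} \<union> {u. adj v u}"

definition restricted_frame_rep :: "'v set \<Rightarrow> ('v \<Rightarrow> 'v \<Rightarrow> bool) \<Rightarrow> ('v \<Rightarrow> frame) \<Rightarrow> bool" where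
  "restricted_frame_rep V adj F \<longleftrightarrow>
     (\<forall>x\<in>V. valid_frame (F x)) \<and>
     (\<forall>x\<in>V. \<forall>y\<in>V. x \<noteq> y \<longrightarrow> (adj x y \<longleftrightarrow> frame_set (F x) \<inter> frame_set (F y) \<noteq> {})) \<and>
     (\<forall>x\<in>V. \<forall>y\<in>V. x \<noteq> y \<longrightarrow> corners (F x) \<inter> frame_set (F y) = {}) \<and>
     (\<forall>x\<in>V. \<forall>y\<in>V. x \<noteq> y \<longrightarrow> left_side (F x) \<inter> frame_set (F y) = {}) \<and>
     (\<forall>x\<in>V. \<forall>y\<in>V. x \<noteq> y \<longrightarrow> right_side (F x) \<inter> frame_set (F y) \<noteq> {} \<longrightarrow>
        right_side (F x) \<inter> top_side (F y) \<noteq> {} \<and> right_side (F x) \<inter> bottom_side (F y) \<noteq> {}) \<and>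
     (\<forall>x\<in>V. \<forall>y\<in>V. x \<noteq> y \<longrightarrow> frame_set (F x) \<inter> frame_set (F y) \<noteq> {} \<longrightarrow>
        (\<forall>z\<in>V. z \<noteq> x \<and> z \<noteq> y \<longrightarrow> \<not> frame_set (F z) \<subseteq> region (F x) \<inter> region (F y)))"

definition induced_cycle :: "'v set \<Rightarrow> ('v \<Rightarrow> 'v \<Rightarrow> bool) \<Rightarrow> 'v list \<Rightarrow> bool" where
  "induced_cycle V adj cs \<longleftrightarrow> length cs \<ge> 3 \<and> distinct cs \<and> set cs \<subseteq> V \<and>
     (\<forall>i<length cs. \<forall>j<length cs.
        adj (cs ! i) (cs ! j) \<longleftrightarrow> (j = Suc i mod length cs \<or> i = Suc j mod length cs))"

end

(*
  In a restricted frame representation, two intersecting frames can only meet in one way: the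
  right side of one of them crosses the other from bottom to top ("pierces" it). A frame that
  contains a frame X also contains every frame meeting X and disjoint from itself, and two
  disjoint frames piercing a common frame are nested.

  In an induced cycle of length at least 4, the frame whose left side lies furthest right is
  pierced by both of its cycle neighbours. These are non-adjacent, so one contains the other,
  and since the non-neighbours of a cycle vertex form a path, that containment spreads to all of
  its non-neighbours. Two non-adjacent vertices with this property would contain each other.
*)
theory Submission
  imports Defs "HOL-Number_Theory.Cong"
begin

lemma mem_frame_set:
  "(x, y) \<in> frame_set F \<longleftrightarrow>
     (x = fx1 F \<or> x = fx2 F) \<and> fy1 F \<le> y \<and> y \<le> fy2 F \<or>
     (y = fy1 F \<or> y = fy2 F) \<and> fx1 F \<le> x \<and> x \<le> fx2 F"
  by (auto simp: frame_set_def left_side_def right_side_def top_side_def bottom_side_def)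

lemma frame_contains_iff:
  assumes "valid_frame B"
  shows "frame_contains A B \<longleftrightarrow> frame_set A \<inter> frame_set B = {} \<and>
           fx1 A \<le> fx1 B \<and> fx2 B \<le> fx2 A \<and> fy1 A \<le> fy1 B \<and> fy2 B \<le> fy2 A"
proof -
  have "(fx1 B, fy1 B) \<in> frame_set B" "(fx2 B, fy2 B) \<in> frame_set B"
    using assms unfolding mem_frame_set valid_frame_def by auto
  moreover have "frame_set B \<subseteq> region A"
    if "fx1 A \<le> fx1 B" "fx2 B \<le> fx2 A" "fy1 A \<le> fy1 B" "fy2 B \<le> fy2 A"
    using that assms by (force simp: region_def mem_frame_set valid_frame_def)
  ultimately show ?thesis
    unfolding frame_contains_def by (auto simp: region_def)
qed

lemma frame_contains_asym:
  assumes "frame_contains A B" "valid_frame A" "valid_frame B"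
  shows "\<not> frame_contains B A"
proof
  assume "frame_contains B A"
  then have "fx1 A = fx1 B" "fy1 A = fy1 B"
    using assms frame_contains_iff by (metis order_antisym)+
  then have "(fx1 B, fy1 B) \<in> frame_set A" "(fx1 B, fy1 B) \<in> frame_set B"
    using assms(2,3) unfolding mem_frame_set valid_frame_def by auto
  then show False using assms(1) unfolding frame_contains_def by blast
qed

text \<open>Otherwise some side of B would run from inside A to outside A and cross A.\<close>
lemma frame_contains_if_interior_point:
  assumes disj: "frame_set A \<inter> frame_set B = {}" and B: "valid_frame B"
    and p: "(x, y) \<in> frame_set B" and "fx1 A < x" "x < fx2 A" "fy1 A < y" "y < fy2 A"
  shows "frame_contains A B"
proof -
  have D: "\<And>a b. (a, b) \<in> frame_set A \<Longrightarrow> (a, b) \<in> frame_set B \<Longrightarrow> False" using disj by blast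
  note crossings = D[of "fx1 A" "fy2 B"] D[of "fx1 A" "fy1 B"] D[of x "fy2 A"] D[of x "fy1 A"]
    D[of "fx2 A" "fy2 B"] D[of "fx2 A" "fy1 B"] D[of "fx1 B" "fy1 A"] D[of "fx2 B" "fy1 A"]
    D[of "fx1 A" y] D[of "fx2 A" y] D[of "fx1 B" "fy2 A"] D[of "fx2 B" "fy2 A"]
  have "fx1 A \<le> fx1 B \<and> fx2 B \<le> fx2 A \<and> fy1 A \<le> fy1 B \<and> fy2 B \<le> fy2 A"
    using crossings p B assms(4-) unfolding mem_frame_set valid_frame_def by smt
  then show ?thesis using disj B frame_contains_iff by blast
qed

lemma frame_contains_intersecting:
  assumes "frame_contains A X" "frame_set X \<inter> frame_set B \<noteq> {}"
    and "frame_set A \<inter> frame_set B = {}" "valid_frame B"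
  shows "frame_contains A B"
proof -
  obtain x y where xy: "(x, y) \<in> frame_set X" "(x, y) \<in> frame_set B" using assms(2) by auto
  then have "(x, y) \<in> region A" "(x, y) \<notin> frame_set A"
    using assms(1) unfolding frame_contains_def by auto
  then have "fx1 A < x" "x < fx2 A" "fy1 A < y" "y < fy2 A"
    unfolding region_def mem_frame_set by auto
  then show ?thesis using frame_contains_if_interior_point assms(3,4) xy(2) by blast
qed

definition restricted_pair :: "frame \<Rightarrow> frame \<Rightarrow> bool" where
  "restricted_pair X Y \<longleftrightarrow>
     corners X \<inter> frame_set Y = {} \<and> left_side X \<inter> frame_set Y = {} \<and>
     (right_side X \<inter> frame_set Y \<noteq> {} \<longrightarrow>
        right_side X \<inter> top_side Y \<noteq> {} \<and> right_side X \<inter> bottom_side Y \<noteq> {})"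

text \<open>The right side of X crosses Y from bottom to top.\<close>
definition pierces :: "frame \<Rightarrow> frame \<Rightarrow> bool" where
  "pierces X Y \<longleftrightarrow>
     fx1 X < fx1 Y \<and> fx1 Y < fx2 X \<and> fx2 X < fx2 Y \<and> fy1 X < fy1 Y \<and> fy2 Y < fy2 X"

lemma pierces_if_right_side_meets:
  assumes X: "valid_frame X" and Y: "valid_frame Y"
    and XY: "restricted_pair X Y" and YX: "restricted_pair Y X"
    and "right_side X \<inter> frame_set Y \<noteq> {}"
  shows "pierces X Y"
proof -
  have "right_side X \<inter> top_side Y \<noteq> {}" "right_side X \<inter> bottom_side Y \<noteq> {}"
    using XY assms(5) unfolding restricted_pair_def by blast+
  then have top: "fx1 Y \<le> fx2 X \<and> fx2 X \<le> fx2 Y \<and> fy1 X \<le> fy2 Y \<and> fy2 Y \<le> fy2 X"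
    and bottom: "fy1 X \<le> fy1 Y \<and> fy1 Y \<le> fy2 X"
    by (auto simp: right_side_def top_side_def bottom_side_def)
  have CY: "\<And>p. p \<in> corners Y \<Longrightarrow> p \<in> frame_set X \<Longrightarrow> False"
    and CX: "\<And>p. p \<in> corners X \<Longrightarrow> p \<in> frame_set Y \<Longrightarrow> False"
    and LX: "\<And>p. p \<in> left_side X \<Longrightarrow> p \<in> frame_set Y \<Longrightarrow> False"
    using XY YX unfolding restricted_pair_def by blast+
  note excluded = CY[of "(fx1 Y, fy2 Y)"] CY[of "(fx2 Y, fy2 Y)"]
    CX[of "(fx2 X, fy2 X)"] CX[of "(fx2 X, fy1 X)"] LX[of "(fx1 X, fy2 Y)"]
  show ?thesis using excluded top bottom X Y
    unfolding pierces_def mem_frame_set corners_def left_side_def valid_frame_def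
    by (smt (verit) insert_iff case_prodI mem_Collect_eq)
qed

lemma intersecting_frames_pierce:
  assumes X: "valid_frame X" and Y: "valid_frame Y"
    and XY: "restricted_pair X Y" and YX: "restricted_pair Y X"
    and meet: "frame_set X \<inter> frame_set Y \<noteq> {}"
  shows "pierces X Y \<or> pierces Y X"
proof -
  obtain x y where xy: "(x, y) \<in> frame_set X" "(x, y) \<in> frame_set Y" using meet by auto
  consider "(x, y) \<in> right_side X" | "(x, y) \<in> right_side Y"
    | "(x, y) \<notin> right_side X" "(x, y) \<notin> right_side Y" by blast
  then show ?thesis
  proof cases
    case 1
    then show ?thesis using xy pierces_if_right_side_meets[OF X Y XY YX] by blast
  next
    case 2
    then show ?thesis using xy pierces_if_right_side_meets[OF Y X YX XY] by blast
  next
    case 3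
    text \<open>Then (x, y) lies on horizontal sides of both frames, so the left corner of the
      frame whose left side is further right lies on the other frame.\<close>
    have "(x, y) \<notin> left_side X" "(x, y) \<notin> left_side Y"
      using xy XY YX unfolding restricted_pair_def by blast+
    with 3 xy have hX: "(y = fy1 X \<or> y = fy2 X) \<and> fx1 X \<le> x \<and> x \<le> fx2 X"
      and hY: "(y = fy1 Y \<or> y = fy2 Y) \<and> fx1 Y \<le> x \<and> x \<le> fx2 Y"
      by (auto simp: frame_set_def left_side_def right_side_def top_side_def bottom_side_def)
    have "(fx1 X, y) \<in> corners X" "(fx1 Y, y) \<in> corners Y"
      using hX hY by (auto simp: corners_def)
    moreover have "(fx1 Y, y) \<in> frame_set X \<or> (fx1 X, y) \<in> frame_set Y"
      using hX hY unfolding mem_frame_set by linarith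
    ultimately show ?thesis using XY YX unfolding restricted_pair_def by blast
  qed
qed

lemma pierces_same_frame_nested:
  assumes A: "valid_frame A" and B: "valid_frame B" and C: "valid_frame C"
    and AB: "pierces A B" and CB: "pierces C B" and disj: "frame_set A \<inter> frame_set C = {}"
  shows "frame_contains A C \<or> frame_contains C A"
proof -
  have "(fx2 A, fy1 B) \<in> frame_set A" "(fx2 C, fy1 B) \<in> frame_set C"
    using AB CB B unfolding pierces_def mem_frame_set valid_frame_def by auto
  then have "fx2 A \<noteq> fx2 C" using disj by auto
  then consider "fx2 C < fx2 A" | "fx2 A < fx2 C" by linarith
  then show ?thesis
  proof cases
    case 1
    have "(fx2 C, fy1 B) \<in> frame_set C" using CB B unfolding pierces_def mem_frame_set valid_frame_def by auto
    moreover have "fx1 A < fx2 C" "fy1 A < fy1 B" "fy1 B < fy2 A"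
      using 1 AB CB B unfolding pierces_def valid_frame_def by auto
    ultimately show ?thesis using frame_contains_if_interior_point[OF disj C] 1 by blast
  next
    case 2
    have "(fx2 A, fy1 B) \<in> frame_set A" using AB B unfolding pierces_def mem_frame_set valid_frame_def by auto
    moreover have "fx1 C < fx2 A" "fy1 C < fy1 B" "fy1 B < fy2 C"
      using 2 AB CB B unfolding pierces_def valid_frame_def by auto
    moreover have "frame_set C \<inter> frame_set A = {}" using disj by blast
    ultimately show ?thesis using frame_contains_if_interior_point[of C A] 2 A by blast
  qed
qed

definition cyclic_nth :: "'a list \<Rightarrow> nat \<Rightarrow> 'a" where
  "cyclic_nth xs m = xs ! (m mod length xs)"

lemma cyclic_nth_add_length [simp]: "cyclic_nth xs (m + length xs) = cyclic_nth xs m"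
  by (simp add: cyclic_nth_def)

lemma cyclic_nth_less [simp]: "m < length xs \<Longrightarrow> cyclic_nth xs m = xs ! m"
  by (simp add: cyclic_nth_def)

lemma cyclic_nth_mem: "xs \<noteq> [] \<Longrightarrow> cyclic_nth xs m \<in> set xs"
  by (simp add: cyclic_nth_def)

lemma in_set_conv_cyclic_nth:
  assumes "m < length xs"
  shows "w \<in> set xs \<longleftrightarrow> (\<exists>d<length xs. w = cyclic_nth xs (m + d))"
proof
  assume "w \<in> set xs"
  then obtain l where l: "l < length xs" "w = xs ! l" by (auto simp: in_set_conv_nth)
  have "(m + (l + length xs - m)) mod length xs = l" using l(1) assms by simp
  then have "w = cyclic_nth xs (m + (l + length xs - m) mod length xs)"
    by (simp add: cyclic_nth_def mod_add_right_eq l(2))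
  moreover have "(l + length xs - m) mod length xs < length xs" using l(1) by (auto intro: mod_less_divisor)
  ultimately show "\<exists>d<length xs. w = cyclic_nth xs (m + d)" by blast
qed (use assms cyclic_nth_mem[of xs] in fastforce)

lemma cyclic_nth_eq_iff:
  assumes "distinct xs" "d < length xs" "e < length xs"
  shows "cyclic_nth xs (m + d) = cyclic_nth xs (m + e) \<longleftrightarrow> d = e"
proof -
  have "xs \<noteq> []" using assms(2) by auto
  then have "cyclic_nth xs (m + d) = cyclic_nth xs (m + e) \<longleftrightarrow> [m + d = m + e] (mod length xs)"
    using assms(1) by (simp add: cyclic_nth_def nth_eq_iff_index_eq cong_def)
  also have "\<dots> \<longleftrightarrow> d = e"
    using assms(2,3) cong_less_modulus_unique_nat by (auto simp: cong_add_lcancel_nat)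
  finally show ?thesis .
qed

lemma induced_cycle_adj_cyclic_nth:
  assumes "induced_cycle V adj cs"
  shows "adj (cyclic_nth cs m) (cyclic_nth cs (m + d)) \<longleftrightarrow>
           d mod length cs = 1 \<or> d mod length cs = length cs - 1"
proof -
  define n where "n = length cs"
  have n: "n \<ge> 3" using assms unfolding induced_cycle_def n_def by simp
  have "m mod n < n" "(m + d) mod n < n" using n by simp_all
  then have "adj (cyclic_nth cs m) (cyclic_nth cs (m + d)) \<longleftrightarrow>
          (m + d) mod n = Suc (m mod n) mod n \<or> m mod n = Suc ((m + d) mod n) mod n"
    using assms unfolding induced_cycle_def cyclic_nth_def n_def by blast
  also have "\<dots> \<longleftrightarrow> [m + d = m + 1] (mod n) \<or> [m = m + d + 1] (mod n)"
    by (simp add: cong_def mod_Suc_eq)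
  also have "[m + d = m + 1] (mod n) \<longleftrightarrow> d mod n = 1"
    unfolding cong_add_lcancel_nat using n by (simp add: cong_def)
  also have "[m = m + d + 1] (mod n) \<longleftrightarrow> d mod n = n - 1"
  proof -
    have "[m = m + d + 1] (mod n) \<longleftrightarrow> [m + (d + 1) = m] (mod n)"
      by (simp add: cong_sym_eq)
    also have "\<dots> \<longleftrightarrow> Suc d mod n = 0"
      unfolding cong_add_lcancel_0_nat by (simp add: cong_def)
    also have "\<dots> \<longleftrightarrow> d mod n = n - 1"
      using n unfolding mod_Suc by (simp split: if_split) linarith
    finally show ?thesis .
  qed
  finally show ?thesis unfolding n_def .
qed

lemma induced_cycle_nonneighbour_iff:
  assumes cyc: "induced_cycle V adj cs" and d: "d < length cs"
  shows "cyclic_nth cs (m + d) \<notin> closed_nbhd adj (cyclic_nth cs m) \<longleftrightarrow>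
           2 \<le> d \<and> d + 2 \<le> length cs"
proof -
  have "distinct cs" "0 < length cs" using cyc d unfolding induced_cycle_def by auto
  then have "cyclic_nth cs (m + d) = cyclic_nth cs (m + 0) \<longleftrightarrow> d = 0"
    using cyclic_nth_eq_iff[of cs d 0 m] d by blast
  moreover have "adj (cyclic_nth cs m) (cyclic_nth cs (m + d)) \<longleftrightarrow> d = 1 \<or> d = length cs - 1"
    using induced_cycle_adj_cyclic_nth[OF cyc] d by simp
  ultimately show ?thesis
    using d unfolding closed_nbhd_def by auto
qed

text \<open>The non-neighbours of a vertex of an induced cycle form a path.\<close>
lemma induced_cycle_nonneighbours_connected:
  assumes cyc: "induced_cycle V adj cs" and v: "v \<in> set cs"
    and w0: "w0 \<in> set cs - closed_nbhd adj v" "P w0"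
    and step: "\<And>w w'. w \<in> set cs - closed_nbhd adj v \<Longrightarrow> w' \<in> set cs - closed_nbhd adj v \<Longrightarrow>
                 adj w w' \<Longrightarrow> P w \<Longrightarrow> P w'"
    and w: "w \<in> set cs - closed_nbhd adj v"
  shows "P w"
proof -
  define n where "n = length cs"
  have n: "n \<ge> 3" "cs \<noteq> []" using cyc unfolding induced_cycle_def n_def by auto
  obtain i where i: "i < n" "v = cyclic_nth cs i"
    using v by (auto simp: in_set_conv_nth n_def)
  have offset: "\<exists>d. 2 \<le> d \<and> d + 2 \<le> n \<and> u = cyclic_nth cs (i + d)"
    if "u \<in> set cs - closed_nbhd adj v" for u
    using that induced_cycle_nonneighbour_iff[OF cyc] in_set_conv_cyclic_nth[of i cs] i
    unfolding n_def by (metis Diff_iff)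
  have nonneighbour: "cyclic_nth cs (i + d) \<in> set cs - closed_nbhd adj v"
    if "2 \<le> d" "d + 2 \<le> n" for d
    using that induced_cycle_nonneighbour_iff[OF cyc, of d i] cyclic_nth_mem[OF n(2)] i
    unfolding n_def by simp
  define Q where "Q d \<longleftrightarrow> P (cyclic_nth cs (i + d))" for d
  have Q_Suc: "Q (Suc d) \<longleftrightarrow> Q d" if "2 \<le> d" "Suc d + 2 \<le> n" for d
  proof -
    have fwd: "adj (cyclic_nth cs (i + d)) (cyclic_nth cs (i + Suc d))"
      using induced_cycle_adj_cyclic_nth[OF cyc, of "i + d" 1] n(1) unfolding n_def by simp
    have "i + Suc d + (n - 1) = i + d + length cs" using n(1) unfolding n_def by simp
    then have "cyclic_nth cs (i + Suc d + (n - 1)) = cyclic_nth cs (i + d)"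
      by (metis cyclic_nth_add_length)
    moreover have "adj (cyclic_nth cs (i + Suc d)) (cyclic_nth cs (i + Suc d + (n - 1)))"
      using induced_cycle_adj_cyclic_nth[OF cyc, of "i + Suc d" "n - 1"] n(1) unfolding n_def by simp
    ultimately have bwd: "adj (cyclic_nth cs (i + Suc d)) (cyclic_nth cs (i + d))" by simp
    have "cyclic_nth cs (i + d) \<in> set cs - closed_nbhd adj v"
      "cyclic_nth cs (i + Suc d) \<in> set cs - closed_nbhd adj v"
      using nonneighbour[of d] nonneighbour[of "Suc d"] that by auto
    then show ?thesis unfolding Q_def using step fwd bwd by blast
  qed
  have Q_2: "Q d \<longleftrightarrow> Q 2" if "2 \<le> d" "d + 2 \<le> n" for d
    using that
  proof (induction d rule: dec_induct)
    case (step d)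
    then show ?case using Q_Suc[of d] by simp
  qed simp
  obtain d0 where d0: "2 \<le> d0" "d0 + 2 \<le> n" "w0 = cyclic_nth cs (i + d0)" using offset w0(1) by blast
  obtain d where d: "2 \<le> d" "d + 2 \<le> n" "w = cyclic_nth cs (i + d)" using offset w by blast
  show ?thesis using Q_2[OF d0(1,2)] Q_2[OF d(1,2)] w0(2) d0(3) d(3) unfolding Q_def by simp
qed

lemma restricted_frame_rep_valid:
  "restricted_frame_rep V adj F \<Longrightarrow> x \<in> V \<Longrightarrow> valid_frame (F x)"
  by (simp add: restricted_frame_rep_def)

lemma restricted_frame_rep_adj_iff:
  "restricted_frame_rep V adj F \<Longrightarrow> x \<in> V \<Longrightarrow> y \<in> V \<Longrightarrow> x \<noteq> y \<Longrightarrow>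
     adj x y \<longleftrightarrow> frame_set (F x) \<inter> frame_set (F y) \<noteq> {}"
  by (simp add: restricted_frame_rep_def)

lemma restricted_frame_rep_restricted_pair:
  "restricted_frame_rep V adj F \<Longrightarrow> x \<in> V \<Longrightarrow> y \<in> V \<Longrightarrow> x \<noteq> y \<Longrightarrow>
     restricted_pair (F x) (F y)"
  by (simp add: restricted_frame_rep_def restricted_pair_def)

lemma restricted_frame_rep_nonneighbour_disjoint:
  assumes "restricted_frame_rep V adj F" "v \<in> V" "w \<in> V" "w \<notin> closed_nbhd adj v"
  shows "frame_set (F v) \<inter> frame_set (F w) = {}"
  using assms restricted_frame_rep_adj_iff[OF assms(1-3)] unfolding closed_nbhd_def by auto

lemma restricted_frame_rep_adj_pierces:
  assumes R: "restricted_frame_rep V adj F" and "x \<in> V" "y \<in> V" "x \<noteq> y" "adj x y"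
  shows "pierces (F x) (F y) \<or> pierces (F y) (F x)"
  using intersecting_frames_pierce restricted_frame_rep_valid[OF R] restricted_frame_rep_adj_iff[OF R]
    restricted_frame_rep_restricted_pair[OF R] assms(2-) by metis

definition encloses_nonneighbours :: "('v \<Rightarrow> 'v \<Rightarrow> bool) \<Rightarrow> ('v \<Rightarrow> frame) \<Rightarrow> 'v list \<Rightarrow> 'v \<Rightarrow> bool" where
  "encloses_nonneighbours adj F cs v \<longleftrightarrow>
     (\<forall>w\<in>set cs - closed_nbhd adj v. frame_contains (F v) (F w))"

lemma encloses_nonneighbours_if_contains_one:
  assumes R: "restricted_frame_rep V adj F" and cyc: "induced_cycle V adj cs"
    and v: "v \<in> set cs" and w0: "w0 \<in> set cs - closed_nbhd adj v" "frame_contains (F v) (F w0)"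
  shows "encloses_nonneighbours adj F cs v"
  unfolding encloses_nonneighbours_def
proof
  have V: "set cs \<subseteq> V" using cyc unfolding induced_cycle_def by simp
  fix w assume w: "w \<in> set cs - closed_nbhd adj v"
  show "frame_contains (F v) (F w)"
  proof (rule induced_cycle_nonneighbours_connected
      [where P = "\<lambda>w. frame_contains (F v) (F w)", OF cyc v w0 _ w])
    fix u u' assume u: "u \<in> set cs - closed_nbhd adj v" and u': "u' \<in> set cs - closed_nbhd adj v"
      and "adj u u'" and vu: "frame_contains (F v) (F u)"
    show "frame_contains (F v) (F u')"
    proof (cases "u = u'")
      case False
      then have "frame_set (F u) \<inter> frame_set (F u') \<noteq> {}"
        using restricted_frame_rep_adj_iff[OF R] u u' V \<open>adj u u'\<close> by blast
      moreover have "frame_set (F v) \<inter> frame_set (F u') = {}"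
        using restricted_frame_rep_nonneighbour_disjoint[OF R] u' v V by blast
      ultimately show ?thesis
        using frame_contains_intersecting[OF vu] restricted_frame_rep_valid[OF R] u' V by blast
    qed (use vu in simp)
  qed
qed

lemma encloses_nonneighbours_adjacent:
  assumes R: "restricted_frame_rep V adj F" and "set cs \<subseteq> V"
    and "u \<in> set cs" "v \<in> set cs" "u \<noteq> v"
    and "encloses_nonneighbours adj F cs u" "encloses_nonneighbours adj F cs v"
  shows "adj u v"
proof (rule ccontr)
  assume "\<not> adj u v"
  then have "\<not> adj v u"
    using restricted_frame_rep_adj_iff[OF R] assms(2-5) by (metis inf_commute subsetD)
  with \<open>\<not> adj u v\<close> have "frame_contains (F u) (F v)" "frame_contains (F v) (F u)"
    using assms(3-) unfolding encloses_nonneighbours_def closed_nbhd_def by auto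
  then show False
    using frame_contains_asym restricted_frame_rep_valid[OF R] assms(2-4) by blast
qed

lemma exists_encloses_nonneighbours:
  assumes G: "simple_graph V adj" and R: "restricted_frame_rep V adj F"
    and cyc: "induced_cycle V adj cs"
  shows "\<exists>v\<in>set cs. encloses_nonneighbours adj F cs v"
proof -
  define n where "n = length cs"
  have n: "n \<ge> 3" "cs \<noteq> []" and V: "set cs \<subseteq> V"
    using cyc unfolding induced_cycle_def n_def by auto
  have nonneighbour_iff: "cyclic_nth cs (m + d) \<notin> closed_nbhd adj (cyclic_nth cs m) \<longleftrightarrow>
      2 \<le> d \<and> d + 2 \<le> n" if "d < n" for m d
    using induced_cycle_nonneighbour_iff[OF cyc] that unfolding n_def by blast
  show ?thesis
  proof (cases "n = 3")
    case True
    have "w \<in> closed_nbhd adj (cyclic_nth cs 0)" if w: "w \<in> set cs" for w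
    proof -
      obtain d where "d < n" "w = cyclic_nth cs (0 + d)"
        using in_set_conv_cyclic_nth[of 0 cs] w n(2) unfolding n_def by auto
      then show ?thesis using nonneighbour_iff[of d 0] True by auto
    qed
    then have "set cs - closed_nbhd adj (cyclic_nth cs 0) = {}" by blast
    then show ?thesis using cyclic_nth_mem[OF n(2)] unfolding encloses_nonneighbours_def by blast
  next
    case False
    then have n4: "n \<ge> 4" using n(1) by simp
    let ?x = "\<lambda>w. fx1 (F w)"
    have "Max (?x ` set cs) \<in> ?x ` set cs" using n(2) by (intro Max_in) auto
    then obtain b where b: "b \<in> set cs" "?x b = Max (?x ` set cs)" by (metis imageE)
    have b_max: "?x w \<le> ?x b" if "w \<in> set cs" for w
      using b(2) that by simp
    obtain d where "b = cyclic_nth cs (0 + d)"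
      using in_set_conv_cyclic_nth[of 0 cs] b(1) n(2) by auto
    moreover have "d + n - 1 + 1 = d + length cs" using n(1) unfolding n_def by simp
    ultimately obtain m where m: "b = cyclic_nth cs (m + 1)"
      by (metis add_0 cyclic_nth_add_length)
    define a c where "a = cyclic_nth cs m" and "c = cyclic_nth cs (m + 2)"
    have abc: "a \<in> set cs" "c \<in> set cs" using cyclic_nth_mem[OF n(2)] a_def c_def by auto
    have pierces_b: "pierces (F w) (F b)" if "w \<in> set cs" "adj w b" for w
    proof -
      have "\<not> pierces (F b) (F w)" using b_max[OF that(1)] unfolding pierces_def by linarith
      moreover have "w \<noteq> b" using G that(2) unfolding simple_graph_def by blast
      ultimately show ?thesis
        using restricted_frame_rep_adj_pierces[OF R] that b(1) V by blast
    qed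
    have "adj a b" "adj b c"
      using induced_cycle_adj_cyclic_nth[OF cyc, of m 1] induced_cycle_adj_cyclic_nth[OF cyc, of "m + 1" 1]
        n(1) unfolding a_def c_def m n_def by (simp_all add: numeral_2_eq_2)
    then have "pierces (F a) (F b)" "pierces (F c) (F b)"
      using pierces_b abc G unfolding simple_graph_def by blast+
    moreover have c_nonneighbour: "c \<in> set cs - closed_nbhd adj a"
      using nonneighbour_iff[of 2 m] n4 abc(2) unfolding a_def c_def by simp
    moreover have a_nonneighbour: "a \<in> set cs - closed_nbhd adj c"
    proof -
      have "m + 2 + (n - 2) = m + length cs" using n(1) unfolding n_def by simp
      then have "cyclic_nth cs (m + 2 + (n - 2)) = a"
        unfolding a_def by (metis cyclic_nth_add_length)
      moreover have "cyclic_nth cs (m + 2 + (n - 2)) \<notin> closed_nbhd adj c"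
        using nonneighbour_iff[of "n - 2" "m + 2"] n4 unfolding c_def by linarith
      ultimately show ?thesis using abc(1) by simp
    qed
    moreover have "frame_set (F a) \<inter> frame_set (F c) = {}"
      using restricted_frame_rep_nonneighbour_disjoint[OF R] c_nonneighbour abc V by blast
    ultimately have "frame_contains (F a) (F c) \<or> frame_contains (F c) (F a)"
      using pierces_same_frame_nested restricted_frame_rep_valid[OF R] abc b(1) V by blast
    then show ?thesis
      using encloses_nonneighbours_if_contains_one[OF R cyc] abc a_nonneighbour c_nonneighbour by blast
  qed
qed

theorem lemma3p7:
  fixes V :: "'v set" and adj :: "'v \<Rightarrow> 'v \<Rightarrow> bool" and F :: "'v \<Rightarrow> frame" and cs :: "'v list"
  assumes "simple_graph V adj"
    and "restricted_frame_rep V adj F"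
    and "induced_cycle V adj cs"
  shows "\<exists>v\<in>set cs.
           (\<forall>w\<in>set cs - closed_nbhd adj v. frame_contains (F v) (F w)) \<and>
           (\<forall>u\<in>set cs. u \<noteq> v \<and> (\<forall>w\<in>set cs - closed_nbhd adj u. frame_contains (F u) (F w))
               \<longrightarrow> adj u v)"
proof -
  obtain v where v: "v \<in> set cs" "encloses_nonneighbours adj F cs v"
    using exists_encloses_nonneighbours[OF assms] by blast
  have "set cs \<subseteq> V" using assms(3) unfolding induced_cycle_def by simp
  then have "adj u v" if "u \<in> set cs" "u \<noteq> v" "encloses_nonneighbours adj F cs u" for u
    using encloses_nonneighbours_adjacent[OF assms(2)] v that by blast
  then show ?thesis using v unfolding encloses_nonneighbours_def by blast
qed

end
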